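(* Let $u,v,w$ be words of length $N$ and let $f$ be an oriented TFPL with boundary $(u,v;w)$. Then $\mathrm{d}(w)-\mathrm{d}(u)-\mathrm{d}(v)=0$ if and only if $o_D(f)=e_U(f)=0$ and $f$ contains no two consecutive edges both oriented leftwards (i.e. no vertex whose incoming and outgoing edges both point in direction $(-1,0)$).
   Context: Let $N\ge 1$. $G^N$ is the induced subgraph of the square lattice $\mathbb{Z}^2$ formed by $N$ consecutive, horizontally centred rows having $3,5,\dots,2N+1$ vertices from top to bottom. It is bipartite; vertices of the same colour as the leftmost vertex of each row are called odd, the others even. Let $B_1,\dots,B_N$ be the even vertices of the bottom row, $L_1,\dots,L_N$ the leftmost vertices of the rows, and $R_1,\dots,R_N$ the rightmost vertices of the rows, each family numbered from left to right (so $L_1$ is the leftmost vertex of the bottom row and $R_1$ the rightmost vertex of the top row). A TFPL of size $N$ is a subgraph $f$ of $G^N$ (a set of edges) such that each $L_i$ and each $R_i$ has degree $0$ or $1$, each $B_i$ has degree $1$, every other vertex has degree $2$, and no path of $f$ joins two vertices $L_i,L_j$ or two vertices $R_i,R_j$. An oriented TFPL is a TFPL together with an orientation of each of its edges such that every vertex of degree $2$ has one incoming and one outgoing edge, the edges at the $L_i$ are oriented away from $L_i$, and the edges at the $R_i$ are oriented into $R_i$. For words $u,v,w\in\{0,1\}^N$, an oriented TFPL has boundary $(u,v;w)$ if for all $i$: $u_i=1$ iff $L_i$ has degree $1$; $v_i=0$ iff $R_i$ has degree $1$; $w_i=1$ if $B_i$ has in-degree $1$ and $w_i=0$ if $B_i$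 has out-degree $1$. $\mathrm{d}(u)$ is the number of pairs $i<j$ with $u_i=1,u_j=0$. $o_D(f)$ is the number of edges of $f$ oriented from an odd vertex to an even vertex and pointing downwards; $e_U(f)$ is the number of edges of $f$ oriented from an even vertex to an odd vertex and pointing upwards. *)

theory Defs
  imports Main
begin

(* Vertices of G^N: points (x,y) of Z^2; row at height y (y = 0 is the bottom row,
   y = N-1 the top row) consists of the points with |x| <= N - y, i.e. rows of
   3,5,...,2N+1 vertices from top to bottom, horizontally centred. *)
type_synonym vert = "int \<times> int"

definition tfpl_verts :: "nat \<Rightarrow> vert set" where
  "tfpl_verts N = {(x,y). 0 \<le> y \<and> y < int N \<and> \<bar>x\<bar> \<le> int N - y}"

definition tfpl_adj :: "nat \<Rightarrow> vert \<Rightarrow> vert \<Rightarrow> bool" where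
  "tfpl_adj N a b \<longleftrightarrow> a \<in> tfpl_verts N \<and> b \<in> tfpl_verts N \<and>
      \<bar>fst a - fst b\<bar> + \<bar>snd a - snd b\<bar> = 1"

(* odd = same colour as the leftmost vertex (-(N-y), y) of each row *)
definition odd_vert :: "nat \<Rightarrow> vert \<Rightarrow> bool" where
  "odd_vert N p \<longleftrightarrow> even (fst p + snd p + int N)"

definition even_vert :: "nat \<Rightarrow> vert \<Rightarrow> bool" where
  "even_vert N p \<longleftrightarrow> \<not> odd_vert N p"

definition Lv :: "nat \<Rightarrow> nat \<Rightarrow> vert" where
  "Lv N i = (- (int N - int i + 1), int i - 1)"

definition Rv :: "nat \<Rightarrow> nat \<Rightarrow> vert" where
  "Rv N i = (int i, int N - int i)"

definition Bv :: "nat \<Rightarrow> nat \<Rightarrow> vert" where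
  "Bv N i = (2 * int i - 1 - int N, 0)"

(* An oriented subgraph is a set F of directed edges (a,b), meaning a -> b. *)
definition indeg :: "(vert \<times> vert) set \<Rightarrow> vert \<Rightarrow> nat" where
  "indeg F v = card {a. (a, v) \<in> F}"

definition outdeg :: "(vert \<times> vert) set \<Rightarrow> vert \<Rightarrow> nat" where
  "outdeg F v = card {b. (v, b) \<in> F}"

definition deg :: "(vert \<times> vert) set \<Rightarrow> vert \<Rightarrow> nat" where
  "deg F v = indeg F v + outdeg F v"

definition joined :: "(vert \<times> vert) set \<Rightarrow> vert \<Rightarrow> vert \<Rightarrow> bool" where
  "joined F a b \<longleftrightarrow> (a, b) \<in> (F \<union> F\<inverse>)\<^sup>*"

definition oriented_TFPL :: "nat \<Rightarrow> (vert \<times> vert) set \<Rightarrow> bool" where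
  "oriented_TFPL N F \<longleftrightarrow>
     F \<subseteq> {(a, b). tfpl_adj N a b} \<and>
     (\<forall>a b. (a, b) \<in> F \<longrightarrow> (b, a) \<notin> F) \<and>
     (\<forall>i\<in>{1..N}. deg F (Lv N i) \<le> 1 \<and> indeg F (Lv N i) = 0) \<and>
     (\<forall>i\<in>{1..N}. deg F (Rv N i) \<le> 1 \<and> outdeg F (Rv N i) = 0) \<and>
     (\<forall>i\<in>{1..N}. deg F (Bv N i) = 1) \<and>
     (\<forall>p\<in>tfpl_verts N. p \<notin> Lv N ` {1..N} \<and> p \<notin> Rv N ` {1..N} \<and> p \<notin> Bv N ` {1..N}
        \<longrightarrow> deg F p = 2) \<and>
     (\<forall>p\<in>tfpl_verts N. deg F p = 2 \<longrightarrow> indeg F p = 1 \<and> outdeg F p = 1) \<and>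
     (\<forall>i\<in>{1..N}. \<forall>j\<in>{1..N}. i \<noteq> j \<longrightarrow> \<not> joined F (Lv N i) (Lv N j)) \<and>
     (\<forall>i\<in>{1..N}. \<forall>j\<in>{1..N}. i \<noteq> j \<longrightarrow> \<not> joined F (Rv N i) (Rv N j))"

(* words in {0,1}^N as bool lists (True = 1), u_i = u ! (i-1) *)
definition has_boundary ::
  "nat \<Rightarrow> (vert \<times> vert) set \<Rightarrow> bool list \<Rightarrow> bool list \<Rightarrow> bool list \<Rightarrow> bool" where
  "has_boundary N F u v w \<longleftrightarrow>
     length u = N \<and> length v = N \<and> length w = N \<and>
     (\<forall>i\<in>{1..N}.
        (u ! (i - 1) \<longleftrightarrow> deg F (Lv N i) = 1) \<and>
        (\<not> v ! (i - 1) \<longleftrightarrow> deg F (Rv N i) = 1) \<and>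
        (w ! (i - 1) \<longrightarrow> indeg F (Bv N i) = 1) \<and>
        (\<not> w ! (i - 1) \<longrightarrow> outdeg F (Bv N i) = 1))"

definition dinv :: "bool list \<Rightarrow> nat" where
  "dinv u = card {(i, j). i < j \<and> j < length u \<and> u ! i \<and> \<not> u ! j}"

definition o_D :: "nat \<Rightarrow> (vert \<times> vert) set \<Rightarrow> nat" where
  "o_D N F = card {(a, b) \<in> F. odd_vert N a \<and> even_vert N b \<and> snd b = snd a - 1}"

definition e_U :: "nat \<Rightarrow> (vert \<times> vert) set \<Rightarrow> nat" where
  "e_U N F = card {(a, b) \<in> F. even_vert N a \<and> odd_vert N b \<and> snd b = snd a + 1}"

end

theory Submission
  imports Defs "HOL-Library.Product_Plus"
begin

text \<open>Sweep a cut through \<open>G\<^sup>N\<close> from the top row down to the bottom row, one vertex at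
  a time, and record the edge positions it crosses as a list of slot vectors in \<open>\<int>\<^sup>4\<close>.
  For a suitable bilinear form \<open>B\<close>, the pair sum \<open>\<Sum>\<^bsub>i<j\<^esub> B s\<^sub>i s\<^sub>j\<close> of the initial cut
  (along the left ends) is \<open>8 d(u)\<close> and that of the final cut (along the bottom row and the right
  ends) is \<open>8 (d(w) - d(v))\<close>, up to terms depending only on \<open>N\<close> and on the number of ones,
  which agree because the slot sum is invariant. Sweeping a vertex replaces two adjacent slots
  by two others with the same sum, which changes the pair sum by a local weight. This weight is
  non-negative and vanishes exactly when the vertex neither lies on a vertical edge whose lower
  end is even (these are the edges counted by \<open>o\<^sub>D\<close> and \<open>e\<^sub>U\<close>) nor has two consecutive
  leftward edges. So \<open>8 (d(w) - d(u) - d(v))\<close> is a sum of non-negative terms, and it vanishes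
  iff all of them do.\<close>

section \<open>Pair sums of a biadditive form\<close>

locale biadditive =
  fixes B :: "'a::comm_monoid_add \<Rightarrow> 'a \<Rightarrow> 'b::ab_group_add"
  assumes add_left: "B (p + q) r = B p r + B q r"
    and add_right: "B r (p + q) = B r p + B r q"
begin

lemma zero_left [simp]: "B 0 r = 0"
  using add_left[of 0 0 r] by simp

lemma zero_right [simp]: "B r 0 = 0"
  using add_right[of r 0 0] by simp

fun pair_sum :: "'a list \<Rightarrow> 'b" where
  "pair_sum [] = 0"
| "pair_sum (a # xs) = B a (sum_list xs) + pair_sum xs"

lemma pair_sum_append:
  "pair_sum (xs @ ys) = pair_sum xs + pair_sum ys + B (sum_list xs) (sum_list ys)"
  by (induction xs) (simp_all add: add_left add_right algebra_simps)

lemma pair_sum_swap: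
  assumes "a + b = c + d"
  shows "pair_sum (P @ [c, d] @ S) = pair_sum (P @ [a, b] @ S) + B c d - B a b"
proof -
  have "B c X + B d X = B a X + B b X" for X
    by (metis add_left assms)
  moreover have "B X c + B X d = B X a + B X b" for X
    by (metis add_right assms)
  ultimately show ?thesis
    by (simp add: pair_sum_append add_left add_right algebra_simps)
qed

lemma pair_sum_remove_zero: "pair_sum (P @ 0 # S) = pair_sum (P @ S)"
  by (simp add: pair_sum_append)

end

lemma sum_list_swap_pair:
  fixes a b c d :: "'a::monoid_add"
  assumes "a + b = c + d"
  shows "sum_list (P @ [c, d] @ S) = sum_list (P @ [a, b] @ S)"
  using assms by (simp add: add.assoc[symmetric])

section \<open>Slots and inversion numbers\<close>

text \<open>A slot \<open>(a, b, c, d)\<close> describes an edge position crossed by the cut: \<open>(a, b)\<close> is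
  \<open>(1, 0)\<close> for a vertical and \<open>(0, 1)\<close> for a horizontal position, \<open>c\<close> is \<open>1\<close>, \<open>-1\<close> or
  \<open>0\<close> for an edge oriented right or down, left or up, or absent, and \<open>d\<close> is \<open>\<plusminus>1\<close> for a
  present or absent edge, times the colour of the left or upper end.\<close>

type_synonym slot = "int \<times> int \<times> int \<times> int"

definition slot_form :: "slot \<Rightarrow> slot \<Rightarrow> int" where
  "slot_form p q = (case p of (a, b, c, d) \<Rightarrow> case q of (a', b', c', d') \<Rightarrow>
     2*a*b' - a*c' - 2*b*a' + b*c' - 2*b*d' + 3*c*a' + c*b' + c*d' + 2*d*b' - d*c')"

lemma slot_form_simp [simp]:
  "slot_form (a, b, c, d) (a', b', c', d') =
     2*a*b' - a*c' - 2*b*a' + b*c' - 2*b*d' + 3*c*a' + c*b' + c*d' + 2*d*b' - d*c'"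
  by (simp add: slot_form_def)

interpretation slot: biadditive slot_form
proof
  fix p q r :: slot
  show "slot_form (p + q) r = slot_form p r + slot_form q r"
    by (cases p; cases q; cases r) (simp add: algebra_simps)
  show "slot_form r (p + q) = slot_form r p + slot_form r q"
    by (cases p; cases q; cases r) (simp add: algebra_simps)
qed

abbreviation ones :: "bool list \<Rightarrow> int" where
  "ones xs \<equiv> int (length (filter (\<lambda>b. b) xs))"

lemma zeros_eq: "int (length (filter Not xs)) = int (length xs) - ones xs"
  using sum_length_filter_compl[of "\<lambda>b. b" xs] by simp

lemma dinv_Nil [simp]: "dinv [] = 0"
  by (simp add: dinv_def)

lemma dinv_Cons: "dinv (b # xs) = (if b then length (filter Not xs) else 0) + dinv xs"
proof -
  let ?A = "{(i, j). i < j \<and> j < length (b # xs) \<and> (b # xs) ! i \<and> \<not> (b # xs) ! j}"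
  let ?B = "{(i, j). i < j \<and> j < length xs \<and> xs ! i \<and> \<not> xs ! j}"
  let ?C = "(\<lambda>j. (0::nat, Suc j)) ` {j. j < length xs \<and> b \<and> \<not> xs ! j}"
  let ?f = "\<lambda>(i::nat, j::nat). (Suc i, Suc j)"
  have split: "?A = ?C \<union> ?f ` ?B"
  proof (rule set_eqI, rule iffI)
    fix p assume "p \<in> ?A"
    then obtain i j where p: "p = (i, j)" "i < j" "j < Suc (length xs)" "(b # xs) ! i" "\<not> (b # xs) ! j"
      by auto
    then obtain j' where j': "j = Suc j'" by (cases j) auto
    show "p \<in> ?C \<union> ?f ` ?B"
    proof (cases i)
      case 0
      then show ?thesis using p j' by auto
    next
      case (Suc i')
      then have "(i', j') \<in> ?B" using p j' by auto
      then show ?thesis using p j' Suc by (auto intro!: image_eqI[where x = "(i', j')"])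
    qed
  qed auto
  have "finite ?B"
    by (rule finite_subset[of _ "{..<length xs} \<times> {..<length xs}"]) auto
  then have "card ?A = card ?C + card (?f ` ?B)"
    unfolding split by (intro card_Un_disjoint) auto
  also have "card (?f ` ?B) = card ?B"
    by (rule card_image) (auto simp: inj_on_def)
  also have "card ?C = card {j. j < length xs \<and> b \<and> \<not> xs ! j}"
    by (rule card_image) (auto simp: inj_on_def)
  also have "\<dots> = (if b then length (filter Not xs) else 0)"
    by (cases b) (auto simp: length_filter_conv_card)
  finally show ?thesis
    unfolding dinv_def by simp
qed

text \<open>The boundary positions: \<open>left_code u\<^sub>i\<close> stands for \<open>L\<^sub>i\<close>, \<open>right_code v\<^sub>i\<close> for
  \<open>R\<^sub>i\<close>, \<open>bottom_code w\<^sub>i\<close> for the half-edge below \<open>B\<^sub>i\<close> and \<open>gap_code\<close> for an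
  empty vertical position whose upper end is odd.\<close>

definition left_code :: "bool \<Rightarrow> slot" where
  "left_code b = (1, 1, of_bool b, 2 * of_bool b - 2)"

definition bottom_code :: "bool \<Rightarrow> slot" where
  "bottom_code b = (1, 0, if b then 1 else -1, -1)"

definition gap_code :: slot where
  "gap_code = (1, 0, 0, -1)"

definition right_code :: "bool \<Rightarrow> slot" where
  "right_code b = (-1, 1, if b then 0 else 1, if b then 2 else 0)"

definition bottom_codes :: "bool list \<Rightarrow> slot list" where
  "bottom_codes w = concat (map (\<lambda>b. [bottom_code b, gap_code]) w)"

lemma bottom_codes_Cons: "bottom_codes (b # w) = bottom_code b # gap_code # bottom_codes w"
  by (simp add: bottom_codes_def)

lemma length_bottom_codes [simp]: "length (bottom_codes w) = 2 * length w"
  by (induction w) (auto simp: bottom_codes_def)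

lemma nth_bottom_codes:
  "k < 2 * length w \<Longrightarrow> bottom_codes w ! k = (if even k then bottom_code (w ! (k div 2)) else gap_code)"
proof (induction w arbitrary: k)
  case (Cons b w)
  consider "k = 0" | "k = 1" | k' where "k = Suc (Suc k')"
    by (metis One_nat_def not0_implies_Suc)
  then show ?case
    using Cons by cases (auto simp: bottom_codes_Cons)
qed simp

lemma sum_left_codes:
  "sum_list (map left_code u) = (int (length u), int (length u), ones u, 2 * ones u - 2 * int (length u))"
  by (induction u) (auto simp: left_code_def zero_prod_def)

lemma sum_bottom_codes:
  "sum_list (bottom_codes w) = (2 * int (length w), 0, 2 * ones w - int (length w), - 2 * int (length w))"
  by (induction w) (auto simp: bottom_codes_def bottom_code_def gap_code_def zero_prod_def)

lemma sum_right_codes: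
  "sum_list (map right_code v) = (- int (length v), int (length v), int (length v) - ones v, 2 * ones v)"
  by (induction v) (auto simp: right_code_def zero_prod_def)

lemma pair_sum_left_codes:
  "slot.pair_sum (map left_code u) =
     8 * int (dinv u) - 2 * int (length u) * ones u + 4 * (ones u)\<^sup>2 - 2 * ones u"
proof (induction u)
  case (Cons b u)
  have "slot.pair_sum (map left_code (b # u)) = slot_form (left_code b)
      (int (length u), int (length u), ones u, 2 * ones u - 2 * int (length u))
      + (8 * int (dinv u) - 2 * int (length u) * ones u + 4 * (ones u)\<^sup>2 - 2 * ones u)"
    using Cons.IH by (simp add: sum_left_codes)
  also have "\<dots> = 8 * int (dinv (b # u)) - 2 * int (length (b # u)) * ones (b # u)
      + 4 * (ones (b # u))\<^sup>2 - 2 * ones (b # u)"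
    by (cases b) (simp_all add: dinv_Cons left_code_def zeros_eq algebra_simps power2_eq_square)
  finally show ?case .
qed simp

lemma pair_sum_bottom_codes:
  "slot.pair_sum (bottom_codes w) = 8 * int (dinv w) - 2 * (int (length w))\<^sup>2 + 4 * (ones w)\<^sup>2"
proof (induction w)
  case (Cons b w)
  have "slot.pair_sum (bottom_codes (b # w)) = slot_form (bottom_code b)
      (gap_code + (2 * int (length w), 0, 2 * ones w - int (length w), - 2 * int (length w)))
      + slot_form gap_code (2 * int (length w), 0, 2 * ones w - int (length w), - 2 * int (length w))
      + (8 * int (dinv w) - 2 * (int (length w))\<^sup>2 + 4 * (ones w)\<^sup>2)"
    using Cons.IH by (simp add: bottom_codes_Cons sum_bottom_codes)
  also have "\<dots> = 8 * int (dinv (b # w)) - 2 * (int (length (b # w)))\<^sup>2 + 4 * (ones (b # w))\<^sup>2"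
    by (cases b) (simp_all add: dinv_Cons bottom_code_def gap_code_def zeros_eq
        algebra_simps power2_eq_square)
  finally show ?case .
qed (simp add: bottom_codes_def)

lemma pair_sum_right_codes:
  "slot.pair_sum (map right_code (rev v)) =
     - 8 * int (dinv v) + 4 * int (length v) * ones v - 4 * (ones v)\<^sup>2"
proof (induction v)
  case (Cons b v)
  have "sum_list (map right_code (rev v)) =
      (- int (length v), int (length v), int (length v) - ones v, 2 * ones v)"
    using sum_right_codes[of "rev v"] by (simp add: rev_filter[symmetric])
  then have "slot.pair_sum (map right_code (rev (b # v))) =
      (- 8 * int (dinv v) + 4 * int (length v) * ones v - 4 * (ones v)\<^sup>2)
      + slot_form (- int (length v), int (length v), int (length v) - ones v, 2 * ones v) (right_code b)"
    using Cons.IH by (simp add: slot.pair_sum_append)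
  also have "\<dots> = - 8 * int (dinv (b # v)) + 4 * int (length (b # v)) * ones (b # v)
      - 4 * (ones (b # v))\<^sup>2"
    by (cases b) (simp_all add: dinv_Cons right_code_def zeros_eq algebra_simps power2_eq_square)
  finally show ?case .
qed simp

section \<open>The weight of a turn\<close>

lemma of_bool_sum4_eq_1:
  "of_bool a + of_bool b + of_bool c + of_bool d = (1::int) \<longleftrightarrow>
   (a \<and> \<not> b \<and> \<not> c \<and> \<not> d) \<or> (\<not> a \<and> b \<and> \<not> c \<and> \<not> d) \<or> (\<not> a \<and> \<not> b \<and> c \<and> \<not> d) \<or> (\<not> a \<and> \<not> b \<and> \<not> c \<and> d)"
  by (cases a; cases b; cases c; cases d) auto

lemma of_bool_sum6_eq_1:
  "of_bool a + of_bool b + of_bool c + of_bool d + of_bool e + of_bool f = (1::int) \<longleftrightarrow>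
   (a \<and> \<not> b \<and> \<not> c \<and> \<not> d \<and> \<not> e \<and> \<not> f) \<or> (\<not> a \<and> b \<and> \<not> c \<and> \<not> d \<and> \<not> e \<and> \<not> f) \<or>
   (\<not> a \<and> \<not> b \<and> c \<and> \<not> d \<and> \<not> e \<and> \<not> f) \<or> (\<not> a \<and> \<not> b \<and> \<not> c \<and> d \<and> \<not> e \<and> \<not> f) \<or>
   (\<not> a \<and> \<not> b \<and> \<not> c \<and> \<not> d \<and> e \<and> \<not> f) \<or> (\<not> a \<and> \<not> b \<and> \<not> c \<and> \<not> d \<and> \<not> e \<and> f)"
  by (cases a; cases b; cases c; cases d; cases e; cases f) auto

definition arc_code :: "bool \<Rightarrow> bool \<Rightarrow> int \<Rightarrow> int \<times> int" where
  "arc_code fwd bwd s = (of_bool fwd - of_bool bwd, (2 * of_bool (fwd \<or> bwd) - 1) * s)"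

text \<open>The change of the pair sum when the cut passes a vertex with out-arc to the left
  \<open>oL\<close>, in-arc from the right \<open>iR\<close>, and vertical arcs \<open>iU, oU, iD, oD\<close>. A vertical edge whose
  lower end is even contributes \<open>4\<close> at each of its ends.\<close>

definition turn_weight :: "bool \<Rightarrow> bool \<Rightarrow> bool \<Rightarrow> bool \<Rightarrow> bool \<Rightarrow> bool \<Rightarrow> bool \<Rightarrow> int" where
  "turn_weight p_odd oL iR iU oU iD oD =
     (let vert_edge = (if p_odd then iD \<or> oD else iU \<or> oU) in
       4 * of_bool vert_edge + 8 * of_bool (iR \<and> oL) + 8 * of_bool (vert_edge \<and> (iR \<or> oL)))"

lemma turn_weight_nonneg: "0 \<le> turn_weight p_odd oL iR iU oU iD oD"
  by (simp add: turn_weight_def Let_def)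

lemma turn_weight_eq_0_iff:
  "turn_weight p_odd oL iR iU oU iD oD = 0 \<longleftrightarrow>
   \<not> (if p_odd then iD \<or> oD else iU \<or> oU) \<and> \<not> (iR \<and> oL)"
  by (simp add: turn_weight_def Let_def)

lemma turn_interior:
  fixes s :: int
  assumes "s = (if p_odd then 1 else -1)"
    and "of_bool iL + of_bool iR + of_bool iU + of_bool iD = (1::int)"
    and "of_bool oL + of_bool oR + of_bool oU + of_bool oD = (1::int)"
    and "\<not> (iL \<and> oL)" "\<not> (iR \<and> oR)" "\<not> (iU \<and> oU)" "\<not> (iD \<and> oD)"
  defines "hL \<equiv> (0, 1, arc_code iL oL (- s))" and "up \<equiv> (1, 0, arc_code iU oU (- s))"
    and "dn \<equiv> (1, 0, arc_code oD iD s)" and "hR \<equiv> (0, 1, arc_code oR iR s)"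
  shows "hL + up = dn + hR \<and> slot_form dn hR - slot_form hL up = turn_weight p_odd oL iR iU oU iD oD"
  using assms(2-) unfolding of_bool_sum4_eq_1 hL_def up_def dn_def hR_def
  by (elim disjE conjE; cases p_odd; simp add: assms(1) arc_code_def turn_weight_def)

lemma turn_left_end:
  assumes "\<not> (oR \<and> oD)"
  defines "dn \<equiv> (1, 0, arc_code oD False 1)" and "hR \<equiv> (0, 1, arc_code oR False 1)"
  shows "left_code (oR \<or> oD) + 0 = dn + hR \<and>
    slot_form dn hR - slot_form (left_code (oR \<or> oD)) 0 = turn_weight True False False False False False oD"
  using assms unfolding dn_def hR_def arc_code_def turn_weight_def left_code_def
  by (cases oR; cases oD; simp add: zero_prod_def)

lemma turn_right_end:
  assumes "\<not> (iL \<and> iD)"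
  defines "hL \<equiv> (0, 1, arc_code iL False (- 1))" and "dn \<equiv> (1, 0, arc_code False iD 1)"
  shows "hL + 0 = dn + right_code (\<not> (iL \<or> iD)) \<and>
    slot_form dn (right_code (\<not> (iL \<or> iD))) - slot_form hL 0 = turn_weight True False False False False iD False"
  using assms unfolding dn_def hL_def arc_code_def turn_weight_def right_code_def
  by (cases iL; cases iD; simp add: zero_prod_def)

lemma turn_bottom:
  assumes "of_bool iL + of_bool oL + of_bool iR + of_bool oR + of_bool iU + of_bool oU = (1::int)"
  defines "hL \<equiv> (0, 1, arc_code iL oL 1)" and "up \<equiv> (1, 0, arc_code iU oU 1)"
    and "hR \<equiv> (0, 1, arc_code oR iR (- 1))"
  shows "hL + up = bottom_code (iL \<or> iR \<or> iU) + hR \<and>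
    slot_form (bottom_code (iL \<or> iR \<or> iU)) hR - slot_form hL up = turn_weight False oL iR iU oU False False"
  using assms unfolding of_bool_sum6_eq_1 hL_def up_def hR_def arc_code_def turn_weight_def bottom_code_def
  by (elim disjE conjE; simp)

section \<open>Local structure of an oriented TFPL\<close>

lemma tfpl_verts_iff: "(x, y) \<in> tfpl_verts N \<longleftrightarrow> 0 \<le> y \<and> y < int N \<and> \<bar>x\<bar> \<le> int N - y"
  by (simp add: tfpl_verts_def)

lemma finite_tfpl_verts: "finite (tfpl_verts N)"
proof (rule finite_subset)
  show "tfpl_verts N \<subseteq> {- int N..int N} \<times> {0..int N}"
    by (auto simp: tfpl_verts_def)
qed auto

definition on_left :: "nat \<Rightarrow> vert \<Rightarrow> bool" where
  "on_left N p \<longleftrightarrow> p \<in> Lv N ` {1..N}"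

definition on_right :: "nat \<Rightarrow> vert \<Rightarrow> bool" where
  "on_right N p \<longleftrightarrow> p \<in> Rv N ` {1..N}"

definition on_bottom :: "nat \<Rightarrow> vert \<Rightarrow> bool" where
  "on_bottom N p \<longleftrightarrow> p \<in> Bv N ` {1..N}"

lemma on_left_iff: "on_left N (x, y) \<longleftrightarrow> 0 \<le> y \<and> y < int N \<and> x = - (int N - y)"
proof
  assume "on_left N (x, y)"
  then show "0 \<le> y \<and> y < int N \<and> x = - (int N - y)"
    by (auto simp: on_left_def Lv_def)
next
  assume "0 \<le> y \<and> y < int N \<and> x = - (int N - y)"
  then have "nat (y + 1) \<in> {1..N}" "(x, y) = Lv N (nat (y + 1))"
    by (auto simp: Lv_def)
  then show "on_left N (x, y)"
    unfolding on_left_def by blast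
qed

lemma on_right_iff: "on_right N (x, y) \<longleftrightarrow> 0 \<le> y \<and> y < int N \<and> x = int N - y"
proof
  assume "on_right N (x, y)"
  then show "0 \<le> y \<and> y < int N \<and> x = int N - y"
    by (auto simp: on_right_def Rv_def)
next
  assume "0 \<le> y \<and> y < int N \<and> x = int N - y"
  then have "nat (int N - y) \<in> {1..N}" "(x, y) = Rv N (nat (int N - y))"
    by (auto simp: Rv_def)
  then show "on_right N (x, y)"
    unfolding on_right_def by blast
qed

lemma on_bottom_iff: "on_bottom N (x, y) \<longleftrightarrow> y = 0 \<and> \<bar>x\<bar> \<le> int N \<and> odd (x + int N)"
proof
  assume "on_bottom N (x, y)"
  then show "y = 0 \<and> \<bar>x\<bar> \<le> int N \<and> odd (x + int N)"
    by (auto simp: on_bottom_def Bv_def)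
next
  assume h: "y = 0 \<and> \<bar>x\<bar> \<le> int N \<and> odd (x + int N)"
  then obtain k where k: "x + int N = 2 * k + 1"
    by (meson oddE)
  with h have "nat (k + 1) \<in> {1..N}" "(x, y) = Bv N (nat (k + 1))"
    by (auto simp: Bv_def)
  then show "on_bottom N (x, y)"
    unfolding on_bottom_def by blast
qed

definition colour :: "nat \<Rightarrow> vert \<Rightarrow> int" where
  "colour N p = (if odd_vert N p then 1 else -1)"

lemma colour_left: "colour N (x - 1, y) = - colour N (x, y)"
proof -
  have "even (x - 1 + y + int N) \<longleftrightarrow> \<not> even (x + y + int N)"
    by presburger
  then show ?thesis
    by (simp add: colour_def odd_vert_def)
qed

lemma colour_up: "colour N (x, y + 1) = - colour N (x, y)"
proof -
  have "even (x + (y + 1) + int N) \<longleftrightarrow> \<not> even (x + y + int N)"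
    by presburger
  then show ?thesis
    by (simp add: colour_def odd_vert_def)
qed

lemma oriented_TFPL_edge:
  assumes "oriented_TFPL N F" "(a, b) \<in> F"
  shows "a \<in> tfpl_verts N" "b \<in> tfpl_verts N" "\<bar>fst a - fst b\<bar> + \<bar>snd a - snd b\<bar> = 1"
proof -
  have "F \<subseteq> {(a, b). tfpl_adj N a b}"
    using assms(1) unfolding oriented_TFPL_def by (elim conjE)
  with assms(2) show "a \<in> tfpl_verts N" "b \<in> tfpl_verts N" "\<bar>fst a - fst b\<bar> + \<bar>snd a - snd b\<bar> = 1"
    unfolding tfpl_adj_def by blast+
qed

lemma oriented_TFPL_finite: "oriented_TFPL N F \<Longrightarrow> finite F"
  by (rule finite_subset[of _ "tfpl_verts N \<times> tfpl_verts N"])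
    (auto dest: oriented_TFPL_edge simp: finite_tfpl_verts)

lemma oriented_TFPL_no_edge:
  assumes "oriented_TFPL N F" "a \<notin> tfpl_verts N"
  shows "(a, b) \<notin> F" "(b, a) \<notin> F"
  using oriented_TFPL_edge[OF assms(1)] assms(2) by blast+

lemma oriented_TFPL_antisym:
  assumes "oriented_TFPL N F" "(a, b) \<in> F"
  shows "(b, a) \<notin> F"
proof -
  have "\<forall>a b. (a, b) \<in> F \<longrightarrow> (b, a) \<notin> F"
    using assms(1) unfolding oriented_TFPL_def by (elim conjE)
  with assms(2) show ?thesis
    by blast
qed

lemma oriented_TFPL_left_end:
  assumes "oriented_TFPL N F" "on_left N p"
  shows "deg F p \<le> 1 \<and> indeg F p = 0"
proof -
  have "\<forall>i\<in>{1..N}. deg F (Lv N i) \<le> 1 \<and> indeg F (Lv N i) = 0"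
    using assms(1) unfolding oriented_TFPL_def by (elim conjE)
  then show ?thesis
    using assms(2) unfolding on_left_def by force
qed

lemma oriented_TFPL_right_end:
  assumes "oriented_TFPL N F" "on_right N p"
  shows "deg F p \<le> 1 \<and> outdeg F p = 0"
proof -
  have "\<forall>i\<in>{1..N}. deg F (Rv N i) \<le> 1 \<and> outdeg F (Rv N i) = 0"
    using assms(1) unfolding oriented_TFPL_def by (elim conjE)
  then show ?thesis
    using assms(2) unfolding on_right_def by force
qed

lemma oriented_TFPL_bottom:
  assumes "oriented_TFPL N F" "on_bottom N p"
  shows "deg F p = 1"
proof -
  have "\<forall>i\<in>{1..N}. deg F (Bv N i) = 1"
    using assms(1) unfolding oriented_TFPL_def by (elim conjE)
  then show ?thesis
    using assms(2) unfolding on_bottom_def by force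
qed

lemma oriented_TFPL_inner:
  assumes "oriented_TFPL N F" "p \<in> tfpl_verts N"
    and "\<not> on_left N p" "\<not> on_right N p" "\<not> on_bottom N p"
  shows "indeg F p = 1 \<and> outdeg F p = 1"
proof -
  have "\<forall>p\<in>tfpl_verts N. p \<notin> Lv N ` {1..N} \<and> p \<notin> Rv N ` {1..N} \<and> p \<notin> Bv N ` {1..N}
      \<longrightarrow> deg F p = 2"
    using assms(1) unfolding oriented_TFPL_def by (elim conjE)
  moreover have "\<forall>p\<in>tfpl_verts N. deg F p = 2 \<longrightarrow> indeg F p = 1 \<and> outdeg F p = 1"
    using assms(1) unfolding oriented_TFPL_def by (elim conjE)
  ultimately show ?thesis
    using assms(2-) unfolding on_left_def on_right_def on_bottom_def by simp
qed

lemma card_Collect_four: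
  assumes "\<And>a. P a \<Longrightarrow> a = p1 \<or> a = p2 \<or> a = p3 \<or> a = p4" "distinct [p1, p2, p3, p4]"
  shows "int (card {a. P a}) = of_bool (P p1) + of_bool (P p2) + of_bool (P p3) + of_bool (P p4)"
proof -
  have "{a. P a} = set (filter P [p1, p2, p3, p4])"
    using assms(1) by auto
  moreover have "card (set (filter P [p1, p2, p3, p4])) = length (filter P [p1, p2, p3, p4])"
    using assms(2) by (intro distinct_card distinct_filter)
  ultimately show ?thesis
    by simp
qed

lemma lattice_neighbour_cases:
  fixes a :: vert
  assumes "\<bar>fst a - x\<bar> + \<bar>snd a - y\<bar> = 1"
  shows "a = (x - 1, y) \<or> a = (x + 1, y) \<or> a = (x, y + 1) \<or> a = (x, y - 1)"
proof -
  obtain a1 a2 where a: "a = (a1, a2)"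
    by (cases a)
  with assms have "\<bar>a1 - x\<bar> + \<bar>a2 - y\<bar> = 1"
    by simp
  then have "(a1 = x - 1 \<and> a2 = y) \<or> (a1 = x + 1 \<and> a2 = y) \<or> (a1 = x \<and> a2 = y + 1) \<or> (a1 = x \<and> a2 = y - 1)"
    by arith
  with a show ?thesis
    by auto
qed

lemma indeg_eq_neighbours:
  assumes "oriented_TFPL N F"
  shows "int (indeg F (x, y)) = of_bool (((x - 1, y), (x, y)) \<in> F) + of_bool (((x + 1, y), (x, y)) \<in> F)
     + of_bool (((x, y + 1), (x, y)) \<in> F) + of_bool (((x, y - 1), (x, y)) \<in> F)"
  unfolding indeg_def
proof (rule card_Collect_four)
  fix a assume "(a, (x, y)) \<in> F"
  then have "\<bar>fst a - x\<bar> + \<bar>snd a - y\<bar> = 1"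
    using oriented_TFPL_edge(3)[OF assms] by fastforce
  then show "a = (x - 1, y) \<or> a = (x + 1, y) \<or> a = (x, y + 1) \<or> a = (x, y - 1)"
    by (rule lattice_neighbour_cases)
qed simp

lemma outdeg_eq_neighbours:
  assumes "oriented_TFPL N F"
  shows "int (outdeg F (x, y)) = of_bool (((x, y), (x - 1, y)) \<in> F) + of_bool (((x, y), (x + 1, y)) \<in> F)
     + of_bool (((x, y), (x, y + 1)) \<in> F) + of_bool (((x, y), (x, y - 1)) \<in> F)"
  unfolding outdeg_def
proof (rule card_Collect_four)
  fix a assume "((x, y), a) \<in> F"
  then have "\<bar>fst a - x\<bar> + \<bar>snd a - y\<bar> = 1"
    using oriented_TFPL_edge(3)[OF assms] by (fastforce simp: abs_minus_commute)
  then show "a = (x - 1, y) \<or> a = (x + 1, y) \<or> a = (x, y + 1) \<or> a = (x, y - 1)"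
    by (rule lattice_neighbour_cases)
qed simp

text \<open>\<open>hslot N F x y\<close> is the position between \<open>(x, y)\<close> and \<open>(x + 1, y)\<close>, and
  \<open>vslot N F x y\<close> the one between \<open>(x, y - 1)\<close> and \<open>(x, y)\<close>. The positions left of
  \<open>L\<^sub>i\<close>, right of \<open>R\<^sub>i\<close> and below \<open>B\<^sub>i\<close> carry the boundary codes, and those above an
  end vertex are empty slots \<open>0\<close>, so that at every vertex the four surrounding slots balance.\<close>

definition hslot :: "nat \<Rightarrow> (vert \<times> vert) set \<Rightarrow> int \<Rightarrow> int \<Rightarrow> slot" where
  "hslot N F x y =
     (if on_left N (x + 1, y) then left_code (deg F (x + 1, y) = 1)
      else if on_right N (x, y) then right_code (deg F (x, y) \<noteq> 1)
      else (0, 1, arc_code (((x, y), (x + 1, y)) \<in> F) (((x + 1, y), (x, y)) \<in> F) (colour N (x, y))))"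

definition vslot :: "nat \<Rightarrow> (vert \<times> vert) set \<Rightarrow> int \<Rightarrow> int \<Rightarrow> slot" where
  "vslot N F x y =
     (if on_bottom N (x, y) then bottom_code (indeg F (x, y) = 1)
      else if on_left N (x, y - 1) \<or> on_right N (x, y - 1) then 0
      else (1, 0, arc_code (((x, y), (x, y - 1)) \<in> F) (((x, y - 1), (x, y)) \<in> F) (colour N (x, y))))"

definition turn_gain :: "nat \<Rightarrow> (vert \<times> vert) set \<Rightarrow> int \<Rightarrow> int \<Rightarrow> int" where
  "turn_gain N F x y =
     slot_form (vslot N F x y) (hslot N F x y) - slot_form (hslot N F (x - 1) y) (vslot N F x (y + 1))"

locale tfpl_vertex =
  fixes N :: nat and F :: "(vert \<times> vert) set" and x y :: int
  assumes tfpl: "oriented_TFPL N F" and vertex: "(x, y) \<in> tfpl_verts N"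
begin

abbreviation "iL \<equiv> ((x - 1, y), (x, y)) \<in> F"
abbreviation "oL \<equiv> ((x, y), (x - 1, y)) \<in> F"
abbreviation "iR \<equiv> ((x + 1, y), (x, y)) \<in> F"
abbreviation "oR \<equiv> ((x, y), (x + 1, y)) \<in> F"
abbreviation "iU \<equiv> ((x, y + 1), (x, y)) \<in> F"
abbreviation "oU \<equiv> ((x, y), (x, y + 1)) \<in> F"
abbreviation "iD \<equiv> ((x, y - 1), (x, y)) \<in> F"
abbreviation "oD \<equiv> ((x, y), (x, y - 1)) \<in> F"

abbreviation "flux_conserved \<equiv>
  hslot N F (x - 1) y + vslot N F x (y + 1) = vslot N F x y + hslot N F x y"

lemma in_range: "0 \<le> y" "y < int N" "\<bar>x\<bar> \<le> int N - y"
  using vertex by (auto simp: tfpl_verts_iff)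

lemma no_opposite_arcs: "\<not> (iL \<and> oL)" "\<not> (iR \<and> oR)" "\<not> (iU \<and> oU)" "\<not> (iD \<and> oD)"
  using oriented_TFPL_antisym[OF tfpl] by blast+

lemma degrees:
  "int (indeg F (x, y)) = of_bool iL + of_bool iR + of_bool iU + of_bool iD"
  "int (outdeg F (x, y)) = of_bool oL + of_bool oR + of_bool oU + of_bool oD"
  "int (deg F (x, y)) = int (indeg F (x, y)) + int (outdeg F (x, y))"
  using indeg_eq_neighbours[OF tfpl] outdeg_eq_neighbours[OF tfpl] by (simp_all add: deg_def)

lemma hslot_left:
  assumes "\<not> on_left N (x, y)"
  shows "hslot N F (x - 1) y = (0, 1, arc_code iL oL (- colour N (x, y)))"
proof -
  have "\<not> on_right N (x - 1, y)"
    using in_range by (auto simp: on_right_iff)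
  with assms show ?thesis
    by (simp add: hslot_def colour_left)
qed

lemma hslot_right:
  assumes "\<not> on_right N (x, y)"
  shows "hslot N F x y = (0, 1, arc_code oR iR (colour N (x, y)))"
proof -
  have "\<not> on_left N (x + 1, y)"
    using in_range by (auto simp: on_left_iff)
  with assms show ?thesis
    by (simp add: hslot_def)
qed

lemma vslot_up:
  assumes "\<not> on_left N (x, y)" "\<not> on_right N (x, y)"
  shows "vslot N F x (y + 1) = (1, 0, arc_code iU oU (- colour N (x, y)))"
proof -
  have "\<not> on_bottom N (x, y + 1)"
    using in_range by (auto simp: on_bottom_iff)
  with assms show ?thesis
    by (simp add: vslot_def colour_up)
qed

lemma vslot_down:
  assumes "\<not> on_bottom N (x, y)"
  shows "vslot N F x y = (1, 0, arc_code oD iD (colour N (x, y)))"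
proof -
  have "\<not> on_left N (x, y - 1)" "\<not> on_right N (x, y - 1)"
    using in_range by (auto simp: on_left_iff on_right_iff)
  with assms show ?thesis
    by (simp add: vslot_def)
qed

lemma turn_at_left_end:
  assumes "on_left N (x, y)"
  shows "flux_conserved \<and> turn_gain N F x y = turn_weight (odd_vert N (x, y)) oL iR iU oU iD oD"
proof -
  have x: "x = - (int N - y)"
    using assms by (simp add: on_left_iff)
  have "(x - 1, y) \<notin> tfpl_verts N" "(x, y + 1) \<notin> tfpl_verts N"
    using x by (auto simp: tfpl_verts_iff)
  then have outside: "\<not> iL" "\<not> oL" "\<not> iU" "\<not> oU"
    using oriented_TFPL_no_edge[OF tfpl] by blast+
  have "deg F (x, y) \<le> 1" "indeg F (x, y) = 0"
    using oriented_TFPL_left_end[OF tfpl assms] by auto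
  then have deg: "\<not> iR" "\<not> iD" "\<not> (oR \<and> oD)" "deg F (x, y) = 1 \<longleftrightarrow> oR \<or> oD"
    using degrees outside by (auto simp: of_bool_def split: if_splits)
  have "odd_vert N (x, y)" "colour N (x, y) = 1"
    using x by (simp_all add: odd_vert_def colour_def)
  moreover have "hslot N F (x - 1) y = left_code (oR \<or> oD)"
    using assms deg(4) by (simp add: hslot_def)
  moreover have "vslot N F x (y + 1) = 0"
    using assms in_range by (simp add: vslot_def on_bottom_iff)
  moreover have "\<not> on_bottom N (x, y)" "\<not> on_right N (x, y)"
    using x in_range by (auto simp: on_bottom_iff on_right_iff)
  ultimately show ?thesis
    using turn_left_end[OF deg(3)] outside deg hslot_right vslot_down by (simp add: turn_gain_def)
qed

lemma turn_at_right_end: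
  assumes "on_right N (x, y)"
  shows "flux_conserved \<and> turn_gain N F x y = turn_weight (odd_vert N (x, y)) oL iR iU oU iD oD"
proof -
  have x: "x = int N - y"
    using assms by (simp add: on_right_iff)
  have "(x + 1, y) \<notin> tfpl_verts N" "(x, y + 1) \<notin> tfpl_verts N"
    using x by (auto simp: tfpl_verts_iff)
  then have outside: "\<not> iR" "\<not> oR" "\<not> iU" "\<not> oU"
    using oriented_TFPL_no_edge[OF tfpl] by blast+
  have "deg F (x, y) \<le> 1" "outdeg F (x, y) = 0"
    using oriented_TFPL_right_end[OF tfpl assms] by auto
  then have deg: "\<not> oL" "\<not> oD" "\<not> (iL \<and> iD)" "deg F (x, y) \<noteq> 1 \<longleftrightarrow> \<not> (iL \<or> iD)"
    using degrees outside by (auto simp: of_bool_def split: if_splits)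
  have "\<not> on_left N (x + 1, y)"
    using in_range by (auto simp: on_left_iff)
  then have "hslot N F x y = right_code (\<not> (iL \<or> iD))"
    using assms deg(4) by (simp add: hslot_def)
  moreover have "odd_vert N (x, y)" "colour N (x, y) = 1"
    using x by (simp_all add: odd_vert_def colour_def)
  moreover have "vslot N F x (y + 1) = 0"
    using assms in_range by (simp add: vslot_def on_bottom_iff)
  moreover have "\<not> on_bottom N (x, y)" "\<not> on_left N (x, y)"
    using x in_range by (auto simp: on_bottom_iff on_left_iff)
  ultimately show ?thesis
    using turn_right_end[OF deg(3)] outside deg hslot_left vslot_down by (simp add: turn_gain_def)
qed

lemma turn_at_bottom:
  assumes "on_bottom N (x, y)"
  shows "flux_conserved \<and> turn_gain N F x y = turn_weight (odd_vert N (x, y)) oL iR iU oU iD oD"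
proof -
  have y: "y = 0" and x: "odd (x + int N)"
    using assms by (auto simp: on_bottom_iff)
  have "(x, y - 1) \<notin> tfpl_verts N"
    using y by (auto simp: tfpl_verts_iff)
  then have outside: "\<not> iD" "\<not> oD"
    using oriented_TFPL_no_edge[OF tfpl] by blast+
  have one: "of_bool iL + of_bool oL + of_bool iR + of_bool oR + of_bool iU + of_bool oU = (1::int)"
    using oriented_TFPL_bottom[OF tfpl assms] degrees outside by simp
  then have "indeg F (x, y) = 1 \<longleftrightarrow> iL \<or> iR \<or> iU"
    using degrees(1) outside unfolding of_bool_sum6_eq_1 by auto
  then have "vslot N F x y = bottom_code (iL \<or> iR \<or> iU)"
    using assms by (simp add: vslot_def)
  moreover have "\<not> odd_vert N (x, y)" "colour N (x, y) = -1"
    using x y by (simp_all add: odd_vert_def colour_def)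
  moreover have "\<not> on_left N (x, y)" "\<not> on_right N (x, y)"
    using x y by (auto simp: on_left_iff on_right_iff)
  ultimately show ?thesis
    using turn_bottom[OF one] outside hslot_left hslot_right vslot_up by (simp add: turn_gain_def)
qed

lemma turn_at_inner:
  assumes "\<not> on_left N (x, y)" "\<not> on_right N (x, y)" "\<not> on_bottom N (x, y)"
  shows "flux_conserved \<and> turn_gain N F x y = turn_weight (odd_vert N (x, y)) oL iR iU oU iD oD"
proof -
  have "indeg F (x, y) = 1" "outdeg F (x, y) = 1"
    using oriented_TFPL_inner[OF tfpl vertex assms] by auto
  then have "of_bool iL + of_bool iR + of_bool iU + of_bool iD = (1::int)"
    "of_bool oL + of_bool oR + of_bool oU + of_bool oD = (1::int)"
    using degrees by simp_all
  from turn_interior[OF _ this no_opposite_arcs] show ?thesis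
    using assms hslot_left hslot_right vslot_up vslot_down by (simp add: turn_gain_def colour_def)
qed

lemma turn: "flux_conserved \<and> turn_gain N F x y = turn_weight (odd_vert N (x, y)) oL iR iU oU iD oD"
proof -
  consider "on_left N (x, y)" | "on_right N (x, y)" | "on_bottom N (x, y)"
    | "\<not> on_left N (x, y)" "\<not> on_right N (x, y)" "\<not> on_bottom N (x, y)"
    by blast
  then show ?thesis
    by cases (fact turn_at_left_end turn_at_right_end turn_at_bottom turn_at_inner)+
qed

end

section \<open>Sweeping the triangle\<close>

definition left_rim :: "nat \<Rightarrow> (vert \<times> vert) set \<Rightarrow> int \<Rightarrow> slot list" where
  "left_rim N F y = map (\<lambda>j. hslot N F (- (int N - j) - 1) j) [0..y - 1]"

definition right_rim :: "nat \<Rightarrow> (vert \<times> vert) set \<Rightarrow> int \<Rightarrow> slot list" where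
  "right_rim N F y = map (\<lambda>j. hslot N F (int N - j) j) [y + 1..int N - 1]"

text \<open>The cut separating the vertices already swept (the rows above \<open>y\<close> and the vertices
  \<open>x < x0\<close> of row \<open>y\<close>) from the others, read from the bottom left to the top right corner.\<close>

definition frontier :: "nat \<Rightarrow> (vert \<times> vert) set \<Rightarrow> int \<Rightarrow> int \<Rightarrow> slot list" where
  "frontier N F y x0 =
     left_rim N F y @ map (\<lambda>x. vslot N F x y) [- (int N - y)..x0 - 1] @ [hslot N F (x0 - 1) y]
     @ map (\<lambda>x. vslot N F x (y + 1)) [x0..int N - y] @ right_rim N F y"

lemma frontier_step:
  assumes tfpl: "oriented_TFPL N F" and y: "0 \<le> y" "y < int N"
    and x0: "- (int N - y) \<le> x0" "x0 \<le> int N - y"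
  shows "slot.pair_sum (frontier N F y (x0 + 1)) = slot.pair_sum (frontier N F y x0) + turn_gain N F x0 y"
    and "sum_list (frontier N F y (x0 + 1)) = sum_list (frontier N F y x0)"
proof -
  have "(x0, y) \<in> tfpl_verts N"
    using y x0 by (auto simp: tfpl_verts_iff)
  then have flux: "hslot N F (x0 - 1) y + vslot N F x0 (y + 1) = vslot N F x0 y + hslot N F x0 y"
    using tfpl_vertex.turn[OF tfpl_vertex.intro[OF tfpl]] by blast
  let ?P = "left_rim N F y @ map (\<lambda>x. vslot N F x y) [- (int N - y)..x0 - 1]"
  let ?S = "map (\<lambda>x. vslot N F x (y + 1)) [x0 + 1..int N - y] @ right_rim N F y"
  have "[- (int N - y)..x0] = [- (int N - y)..x0 - 1] @ [x0]"
    using x0 by (simp add: upto_rec2)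
  then have after: "frontier N F y (x0 + 1) = ?P @ [vslot N F x0 y, hslot N F x0 y] @ ?S"
    by (simp add: frontier_def)
  have "[x0..int N - y] = x0 # [x0 + 1..int N - y]"
    using x0 by (simp add: upto_rec1)
  then have before: "frontier N F y x0 = ?P @ [hslot N F (x0 - 1) y, vslot N F x0 (y + 1)] @ ?S"
    by (simp add: frontier_def)
  show "slot.pair_sum (frontier N F y (x0 + 1)) = slot.pair_sum (frontier N F y x0) + turn_gain N F x0 y"
    unfolding after before slot.pair_sum_swap[OF flux] turn_gain_def by simp
  show "sum_list (frontier N F y (x0 + 1)) = sum_list (frontier N F y x0)"
    unfolding after before by (rule sum_list_swap_pair[OF flux])
qed

lemma frontier_row:
  assumes tfpl: "oriented_TFPL N F" and y: "0 \<le> y" "y < int N"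
  shows "slot.pair_sum (frontier N F y (int N - y + 1)) =
           slot.pair_sum (frontier N F y (- (int N - y))) + (\<Sum>x = - (int N - y)..int N - y. turn_gain N F x y)"
    and "sum_list (frontier N F y (int N - y + 1)) = sum_list (frontier N F y (- (int N - y)))"
proof -
  let ?s = "- (int N - y)"
  have sweep: "slot.pair_sum (frontier N F y x0) =
        slot.pair_sum (frontier N F y ?s) + (\<Sum>x\<in>{?s..<x0}. turn_gain N F x y)
      \<and> sum_list (frontier N F y x0) = sum_list (frontier N F y ?s)"
    if "?s \<le> x0" "x0 \<le> int N - y + 1" for x0
    using that
  proof (induction x0 rule: int_ge_induct)
    case (step x0)
    have "{?s..<x0 + 1} = insert x0 {?s..<x0}"
      using step.hyps by auto
    then show ?case
      using step frontier_step[OF tfpl y, of x0] by simp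
  qed simp
  have "{?s..<int N - y + 1} = {?s..int N - y}"
    by auto
  moreover have "?s \<le> int N - y + 1"
    using y by simp
  ultimately show "slot.pair_sum (frontier N F y (int N - y + 1)) =
        slot.pair_sum (frontier N F y ?s) + (\<Sum>x = ?s..int N - y. turn_gain N F x y)"
    and "sum_list (frontier N F y (int N - y + 1)) = sum_list (frontier N F y ?s)"
    using sweep[of "int N - y + 1"] by simp_all
qed

lemma frontier_next_row:
  assumes y: "1 \<le> y" "y < int N"
  shows "slot.pair_sum (frontier N F (y - 1) (- (int N - (y - 1)))) =
           slot.pair_sum (frontier N F y (int N - y + 1))"
    and "sum_list (frontier N F (y - 1) (- (int N - (y - 1)))) = sum_list (frontier N F y (int N - y + 1))"
proof -
  let ?L = "left_rim N F y"
  let ?M = "map (\<lambda>x. vslot N F x y) [- (int N - y)..int N - y]"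
  let ?R = "hslot N F (int N - y) y # right_rim N F y"
  have "[0..y - 1] = [0..y - 1 - 1] @ [y - 1]"
    using y by (simp add: upto_rec2)
  then have left: "left_rim N F y = left_rim N F (y - 1) @ [hslot N F (- (int N - (y - 1)) - 1) (y - 1)]"
    by (simp add: left_rim_def)
  have "[y - 1 + 1..int N - 1] = y # [y + 1..int N - 1]"
    using y by (simp add: upto_rec1)
  then have right: "right_rim N F (y - 1) = ?R"
    by (simp add: right_rim_def)
  have "on_left N (- (int N - y + 1), y - 1)" "on_right N (int N - y + 1, y - 1)"
    "\<not> on_bottom N (- (int N - y + 1), y)" "\<not> on_bottom N (int N - y + 1, y)"
    using y by (simp_all add: on_left_iff on_right_iff on_bottom_iff)
  then have ends: "vslot N F (- (int N - y + 1)) y = 0" "vslot N F (int N - y + 1) y = 0"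
    by (simp_all add: vslot_def)
  have "[- (int N - (y - 1))..int N - (y - 1)] = - (int N - y + 1) # [- (int N - y)..int N - (y - 1)]"
    using y by (simp add: upto_rec1)
  also have "[- (int N - y)..int N - (y - 1)] = [- (int N - y)..int N - y] @ [int N - y + 1]"
    using y by (simp add: upto_rec2)
  finally have "[- (int N - (y - 1))..int N - (y - 1)] =
      - (int N - y + 1) # [- (int N - y)..int N - y] @ [int N - y + 1]" .
  then have "frontier N F (y - 1) (- (int N - (y - 1))) = ?L @ 0 # (?M @ 0 # ?R)"
    unfolding frontier_def left right using ends by simp
  moreover have "frontier N F y (int N - y + 1) = ?L @ ?M @ ?R"
    by (simp add: frontier_def)
  ultimately show "slot.pair_sum (frontier N F (y - 1) (- (int N - (y - 1)))) =
           slot.pair_sum (frontier N F y (int N - y + 1))"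
    and "sum_list (frontier N F (y - 1) (- (int N - (y - 1)))) = sum_list (frontier N F y (int N - y + 1))"
    by (simp_all add: slot.pair_sum_remove_zero flip: append_assoc)
qed

lemma sum_tfpl_verts_split_row:
  assumes y: "0 \<le> y" "y < int N"
  shows "(\<Sum>p | p \<in> tfpl_verts N \<and> y \<le> snd p. f p) =
         (\<Sum>p | p \<in> tfpl_verts N \<and> y + 1 \<le> snd p. f p) + (\<Sum>x = - (int N - y)..int N - y. f (x, y))"
proof -
  have split: "{p \<in> tfpl_verts N. y \<le> snd p} =
      {p \<in> tfpl_verts N. y + 1 \<le> snd p} \<union> (\<lambda>x. (x, y)) ` {- (int N - y)..int N - y}"
    using y by (auto simp: tfpl_verts_def image_iff)
  have "(\<Sum>p | p \<in> tfpl_verts N \<and> y \<le> snd p. f p) =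
      (\<Sum>p | p \<in> tfpl_verts N \<and> y + 1 \<le> snd p. f p) + (\<Sum>p\<in>(\<lambda>x. (x, y)) ` {- (int N - y)..int N - y}. f p)"
    unfolding split by (rule sum.union_disjoint) (use finite_tfpl_verts[of N] in auto)
  also have "(\<Sum>p\<in>(\<lambda>x. (x, y)) ` {- (int N - y)..int N - y}. f p) = (\<Sum>x = - (int N - y)..int N - y. f (x, y))"
    by (rule sum.reindex_cong[where l = "\<lambda>x. (x, y)"]) (auto simp: inj_on_def)
  finally show ?thesis .
qed

lemma frontier_sweep:
  assumes tfpl: "oriented_TFPL N F" and N: "1 \<le> N"
  shows "slot.pair_sum (frontier N F 0 (int N + 1)) =
           slot.pair_sum (frontier N F (int N - 1) (- 1)) + (\<Sum>p\<in>tfpl_verts N. turn_gain N F (fst p) (snd p))"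
    and "sum_list (frontier N F 0 (int N + 1)) = sum_list (frontier N F (int N - 1) (- 1))"
proof -
  let ?g = "\<lambda>p. turn_gain N F (fst p) (snd p)"
  let ?top = "frontier N F (int N - 1) (- 1)"
  have sweep: "slot.pair_sum (frontier N F y (int N - y + 1)) =
        slot.pair_sum ?top + (\<Sum>p | p \<in> tfpl_verts N \<and> y \<le> snd p. ?g p)
      \<and> sum_list (frontier N F y (int N - y + 1)) = sum_list ?top"
    if "0 \<le> y" "y \<le> int N - 1" for y
    using that(2,1)
  proof (induction y rule: int_le_induct)
    case base
    have no_row_above: "{p \<in> tfpl_verts N. int N \<le> snd p} = {}"
      by (auto simp: tfpl_verts_def)
    show ?case
      using frontier_row[OF tfpl, of "int N - 1"] sum_tfpl_verts_split_row[of "int N - 1" N ?g] N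
      by (simp add: no_row_above)
  next
    case (step y)
    then show ?case
      using frontier_row[OF tfpl, of "y - 1"] frontier_next_row[of y N F]
        sum_tfpl_verts_split_row[of "y - 1" N ?g]
      by simp
  qed
  have "{p \<in> tfpl_verts N. 0 \<le> snd p} = tfpl_verts N"
    by (auto simp: tfpl_verts_def)
  then show "slot.pair_sum (frontier N F 0 (int N + 1)) = slot.pair_sum ?top + (\<Sum>p\<in>tfpl_verts N. ?g p)"
    and "sum_list (frontier N F 0 (int N + 1)) = sum_list ?top"
    using sweep[of 0] N by simp_all
qed

section \<open>The first and the last cut\<close>

lemma has_boundaryD:
  assumes "has_boundary N F u v w"
  shows "length u = N" "length v = N" "length w = N"
    and "\<And>i. i \<in> {1..N} \<Longrightarrow> u ! (i - 1) \<longleftrightarrow> deg F (Lv N i) = 1"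
    and "\<And>i. i \<in> {1..N} \<Longrightarrow> \<not> v ! (i - 1) \<longleftrightarrow> deg F (Rv N i) = 1"
    and "\<And>i. i \<in> {1..N} \<Longrightarrow> w ! (i - 1) \<Longrightarrow> indeg F (Bv N i) = 1"
    and "\<And>i. i \<in> {1..N} \<Longrightarrow> \<not> w ! (i - 1) \<Longrightarrow> outdeg F (Bv N i) = 1"
  using assms unfolding has_boundary_def by blast+

lemma frontier_top:
  assumes tfpl: "oriented_TFPL N F" and bd: "has_boundary N F u v w" and N: "1 \<le> N"
  shows "frontier N F (int N - 1) (- 1) = map left_code u @ [0, gap_code, 0]"
proof -
  have "[0..int N - 1] = [0..int N - 1 - 1] @ [int N - 1]"
    using N by (simp add: upto_rec2)
  then have rim: "left_rim N F (int N - 1) @ [hslot N F (- 1 - 1) (int N - 1)] =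
      map (\<lambda>j. hslot N F (- (int N - j) - 1) j) [0..int N - 1]"
    by (simp add: left_rim_def)
  have codes: "map (\<lambda>j. hslot N F (- (int N - j) - 1) j) [0..int N - 1] = map left_code u"
  proof (rule nth_equalityI)
    fix k
    assume "k < length (map (\<lambda>j. hslot N F (- (int N - j) - 1) j) [0..int N - 1])"
    then have k: "k < N"
      by simp
    have "u ! k \<longleftrightarrow> deg F (Lv N (k + 1)) = 1"
      using has_boundaryD(4)[OF bd, of "k + 1"] k by simp
    moreover have "on_left N (- (int N - int k) - 1 + 1, int k)" "Lv N (k + 1) = (- (int N - int k), int k)"
      using k by (simp_all add: on_left_iff Lv_def)
    ultimately show "map (\<lambda>j. hslot N F (- (int N - j) - 1) j) [0..int N - 1] ! k = map left_code u ! k"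
      using k has_boundaryD(1)[OF bd] by (simp add: hslot_def)
  qed (use has_boundaryD(1)[OF bd] in simp)
  have "on_left N (- 1, int N - 1)" "on_right N (1, int N - 1)"
    "\<not> on_bottom N (- 1, int N)" "\<not> on_bottom N (1, int N)"
    using N by (simp_all add: on_left_iff on_right_iff on_bottom_iff)
  then have ends: "vslot N F (- 1) (int N - 1 + 1) = 0" "vslot N F 1 (int N - 1 + 1) = 0"
    by (simp_all add: vslot_def)
  have "\<not> on_bottom N (0, int N)" "\<not> on_left N (0, int N - 1)" "\<not> on_right N (0, int N - 1)"
    using N by (auto simp: on_bottom_iff on_left_iff on_right_iff)
  moreover have "(0, int N) \<notin> tfpl_verts N"
    by (simp add: tfpl_verts_iff)
  moreover have "colour N (0, int N) = 1"
    by (simp add: colour_def odd_vert_def)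
  ultimately have apex: "vslot N F 0 (int N - 1 + 1) = gap_code"
    using oriented_TFPL_no_edge[OF tfpl] by (simp add: vslot_def arc_code_def gap_code_def)
  have "[- 1..int N - (int N - 1)] = [- 1, 0, 1]"
    by (simp add: upto_rec1)
  moreover have "right_rim N F (int N - 1) = []"
    by (simp add: right_rim_def)
  ultimately show ?thesis
    unfolding frontier_def using rim codes ends apex by simp
qed

lemma vslot_bottom_row:
  assumes tfpl: "oriented_TFPL N F" and bd: "has_boundary N F u v w"
    and x: "- int N \<le> x" "x \<le> int N"
  shows "vslot N F x 0 = (if odd (x + int N) then bottom_code (w ! nat ((x + int N - 1) div 2)) else gap_code)"
proof (cases "odd (x + int N)")
  case True
  then obtain k where k: "x + int N = 2 * k + 1"
    by (meson oddE)
  with x True have "0 \<le> k" "k < int N"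
    by auto
  then have i: "nat k + 1 \<in> {1..N}" and Bv: "Bv N (nat k + 1) = (x, 0)"
    and idx: "nat ((x + int N - 1) div 2) = nat k"
    using k by (auto simp: Bv_def)
  have bottom: "on_bottom N (x, 0)"
    using True x by (simp add: on_bottom_iff)
  have deg: "indeg F (x, 0) + outdeg F (x, 0) = 1"
    using oriented_TFPL_bottom[OF tfpl bottom] by (simp add: deg_def)
  have "indeg F (x, 0) = 1 \<longleftrightarrow> w ! nat k"
  proof
    assume "w ! nat k"
    then show "indeg F (x, 0) = 1"
      using has_boundaryD(6)[OF bd i] Bv by simp
  next
    assume "indeg F (x, 0) = 1"
    then show "w ! nat k"
      using has_boundaryD(7)[OF bd i] Bv deg by fastforce
  qed
  then show ?thesis
    using True bottom idx by (simp add: vslot_def)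
next
  case False
  then have "\<not> on_bottom N (x, 0)" "\<not> on_left N (x, 0 - 1)" "\<not> on_right N (x, 0 - 1)"
    by (auto simp: on_bottom_iff on_left_iff on_right_iff)
  moreover have "(x, 0 - 1) \<notin> tfpl_verts N"
    by (simp add: tfpl_verts_iff)
  moreover have "colour N (x, 0) = 1"
    using False by (simp add: colour_def odd_vert_def)
  ultimately show ?thesis
    using oriented_TFPL_no_edge[OF tfpl] False by (simp add: vslot_def arc_code_def gap_code_def)
qed

lemma frontier_bottom:
  assumes tfpl: "oriented_TFPL N F" and bd: "has_boundary N F u v w" and N: "1 \<le> N"
  shows "frontier N F 0 (int N + 1) = gap_code # bottom_codes w @ map right_code (rev v)"
proof -
  have bottom: "map (\<lambda>x. vslot N F x 0) [- int N..int N] = gap_code # bottom_codes w"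
  proof (rule nth_equalityI)
    fix k
    assume "k < length (map (\<lambda>x. vslot N F x 0) [- int N..int N])"
    then have k: "k < 2 * N + 1"
      by simp
    have "vslot N F (- int N + int k) 0 =
        (if odd (int k) then bottom_code (w ! nat ((int k - 1) div 2)) else gap_code)"
      using vslot_bottom_row[OF tfpl bd, of "- int N + int k"] k by simp
    moreover have "k = Suc k' \<Longrightarrow> nat ((int k - 1) div 2) = k' div 2" for k'
      by simp
    ultimately show "map (\<lambda>x. vslot N F x 0) [- int N..int N] ! k = (gap_code # bottom_codes w) ! k"
      using k has_boundaryD(3)[OF bd] nth_bottom_codes by (cases k) auto
  qed (use has_boundaryD(3)[OF bd] in simp)
  have right: "map (\<lambda>j. hslot N F (int N - j) j) [0..int N - 1] = map right_code (rev v)"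
  proof (rule nth_equalityI)
    fix k
    assume "k < length (map (\<lambda>j. hslot N F (int N - j) j) [0..int N - 1])"
    then have k: "k < N"
      by simp
    then have i: "N - k \<in> {1..N}" and Rv: "Rv N (N - k) = (int N - int k, int k)"
      by (auto simp: Rv_def of_nat_diff)
    have "\<not> v ! (N - k - 1) \<longleftrightarrow> deg F (Rv N (N - k)) = 1"
      using has_boundaryD(5)[OF bd i] .
    moreover have "rev v ! k = v ! (N - k - 1)"
      using k has_boundaryD(2)[OF bd] by (simp add: rev_nth)
    moreover have "on_right N (int N - int k, int k)" "\<not> on_left N (int N - int k + 1, int k)"
      using k by (auto simp: on_right_iff on_left_iff)
    ultimately show "map (\<lambda>j. hslot N F (int N - j) j) [0..int N - 1] ! k = map right_code (rev v) ! k"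
      using k Rv has_boundaryD(2)[OF bd] by (auto simp: hslot_def)
  qed (use has_boundaryD(2)[OF bd] in simp)
  have "[0..int N - 1] = 0 # [1..int N - 1]"
    using N by (simp add: upto_rec1)
  then have "hslot N F (int N) 0 # right_rim N F 0 = map (\<lambda>j. hslot N F (int N - j) j) [0..int N - 1]"
    by (simp add: right_rim_def)
  then show ?thesis
    unfolding frontier_def using bottom right by (simp add: left_rim_def)
qed

lemma slot_form_gap_code [simp]: "slot_form gap_code q = 0"
  by (cases q) (simp add: gap_code_def)

theorem dinv_defect_eq_sum_turn_gain:
  assumes tfpl: "oriented_TFPL N F" and bd: "has_boundary N F u v w" and N: "1 \<le> N"
  shows "8 * (int (dinv w) - int (dinv u) - int (dinv v)) = (\<Sum>p\<in>tfpl_verts N. turn_gain N F (fst p) (snd p))"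
proof -
  let ?S = "\<Sum>p\<in>tfpl_verts N. turn_gain N F (fst p) (snd p)"
  have len: "length u = N" "length v = N" "length w = N"
    using has_boundaryD[OF bd] by auto
  have pair_sums: "slot.pair_sum (gap_code # bottom_codes w @ map right_code (rev v)) =
      slot.pair_sum (map left_code u @ [0, gap_code, 0]) + ?S"
    and sums: "sum_list (gap_code # bottom_codes w @ map right_code (rev v)) =
      sum_list (map left_code u @ [0, gap_code, 0])"
    using frontier_sweep[OF tfpl N] unfolding frontier_top[OF tfpl bd N] frontier_bottom[OF tfpl bd N] .
  have sum_right: "sum_list (map right_code (rev v)) = (- int N, int N, int N - ones v, 2 * ones v)"
    using sum_right_codes[of "rev v"] len by (simp add: rev_filter[symmetric])
  have sum_bottom: "sum_list (bottom_codes w) = (2 * int N, 0, 2 * ones w - int N, - 2 * int N)"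
    using sum_bottom_codes[of w] len by simp
  have sum_left: "sum_list (map left_code u) = (int N, int N, ones u, 2 * ones u - 2 * int N)"
    using sum_left_codes[of u] len by simp
  from sums have "gap_code + (sum_list (bottom_codes w) + sum_list (map right_code (rev v))) =
      sum_list (map left_code u) + gap_code"
    by (simp add: add.assoc)
  then have "(2 * int N, 0, 2 * ones w - int N, - 2 * int N) + (- int N, int N, int N - ones v, 2 * ones v)
      = (int N, int N, ones u, 2 * ones u - 2 * int N)"
    unfolding sum_right sum_bottom sum_left by (simp add: gap_code_def)
  then have ones: "ones v = ones u" "ones w = ones u"
    by auto
  have "?S = slot.pair_sum (bottom_codes w) + slot.pair_sum (map right_code (rev v))
      + slot_form (sum_list (bottom_codes w)) (sum_list (map right_code (rev v)))
      - slot.pair_sum (map left_code u) - slot_form (sum_list (map left_code u)) gap_code"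
    using pair_sums by (simp add: slot.pair_sum_append slot.add_right)
  also have "\<dots> = 8 * (int (dinv w) - int (dinv u) - int (dinv v))"
    unfolding sum_right sum_bottom sum_left pair_sum_bottom_codes pair_sum_right_codes
      pair_sum_left_codes len ones
    by (simp add: gap_code_def algebra_simps power2_eq_square)
  finally show ?thesis
    by simp
qed

lemma odd_vert_up_iff: "odd_vert N (x, y + 1) \<longleftrightarrow> even_vert N (x, y)"
proof -
  have "even (x + (y + 1) + int N) \<longleftrightarrow> \<not> even (x + y + int N)"
    by presburger
  then show ?thesis
    by (simp add: odd_vert_def even_vert_def)
qed

lemma o_D_eq_0_iff:
  assumes tfpl: "oriented_TFPL N F"
  shows "o_D N F = 0 \<longleftrightarrow> (\<forall>x y. even_vert N (x, y) \<longrightarrow> ((x, y + 1), (x, y)) \<notin> F)"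
proof -
  let ?D = "{(a, b) \<in> F. odd_vert N a \<and> even_vert N b \<and> snd b = snd a - 1}"
  have "finite ?D"
    using oriented_TFPL_finite[OF tfpl] by (rule finite_subset[rotated]) auto
  then have "o_D N F = 0 \<longleftrightarrow> ?D = {}"
    by (simp add: o_D_def)
  also have "\<dots> \<longleftrightarrow> (\<forall>x y. even_vert N (x, y) \<longrightarrow> ((x, y + 1), (x, y)) \<notin> F)"
  proof
    assume empty: "?D = {}"
    show "\<forall>x y. even_vert N (x, y) \<longrightarrow> ((x, y + 1), (x, y)) \<notin> F"
    proof (intro allI impI notI)
      fix x y
      assume "even_vert N (x, y)" "((x, y + 1), (x, y)) \<in> F"
      then have "((x, y + 1), (x, y)) \<in> ?D"
        by (simp add: odd_vert_up_iff)
      with empty show False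
        by blast
    qed
  next
    assume no_arc: "\<forall>x y. even_vert N (x, y) \<longrightarrow> ((x, y + 1), (x, y)) \<notin> F"
    show "?D = {}"
    proof (rule ccontr)
      assume "?D \<noteq> {}"
      then obtain a x y where arc: "(a, (x, y)) \<in> F" "even_vert N (x, y)" "y = snd a - 1"
        by auto
      then have "a = (x, y + 1)"
        using oriented_TFPL_edge(3)[OF tfpl arc(1)] by (cases a) auto
      with arc(1) have "((x, y + 1), (x, y)) \<in> F"
        by simp
      with arc(2) no_arc show False
        by blast
    qed
  qed
  finally show ?thesis .
qed

lemma e_U_eq_0_iff:
  assumes tfpl: "oriented_TFPL N F"
  shows "e_U N F = 0 \<longleftrightarrow> (\<forall>x y. even_vert N (x, y) \<longrightarrow> ((x, y), (x, y + 1)) \<notin> F)"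
proof -
  let ?U = "{(a, b) \<in> F. even_vert N a \<and> odd_vert N b \<and> snd b = snd a + 1}"
  have "finite ?U"
    using oriented_TFPL_finite[OF tfpl] by (rule finite_subset[rotated]) auto
  then have "e_U N F = 0 \<longleftrightarrow> ?U = {}"
    by (simp add: e_U_def)
  also have "\<dots> \<longleftrightarrow> (\<forall>x y. even_vert N (x, y) \<longrightarrow> ((x, y), (x, y + 1)) \<notin> F)"
  proof
    assume empty: "?U = {}"
    show "\<forall>x y. even_vert N (x, y) \<longrightarrow> ((x, y), (x, y + 1)) \<notin> F"
    proof (intro allI impI notI)
      fix x y
      assume "even_vert N (x, y)" "((x, y), (x, y + 1)) \<in> F"
      then have "((x, y), (x, y + 1)) \<in> ?U"
        by (simp add: odd_vert_up_iff)
      with empty show False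
        by blast
    qed
  next
    assume no_arc: "\<forall>x y. even_vert N (x, y) \<longrightarrow> ((x, y), (x, y + 1)) \<notin> F"
    show "?U = {}"
    proof (rule ccontr)
      assume "?U \<noteq> {}"
      then obtain x y b where arc: "((x, y), b) \<in> F" "even_vert N (x, y)" "snd b = y + 1"
        by auto
      then have "b = (x, y + 1)"
        using oriented_TFPL_edge(3)[OF tfpl arc(1)] by (cases b) auto
      with arc no_arc show False
        by blast
    qed
  qed
  finally show ?thesis .
qed

lemma turn_gain_nonneg:
  assumes "oriented_TFPL N F" "(x, y) \<in> tfpl_verts N"
  shows "0 \<le> turn_gain N F x y"
  using tfpl_vertex.turn[OF tfpl_vertex.intro[OF assms]] turn_weight_nonneg by simp

lemma turn_gain_eq_0_iff:
  assumes "oriented_TFPL N F" "(x, y) \<in> tfpl_verts N"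
  shows "turn_gain N F x y = 0 \<longleftrightarrow>
    (odd_vert N (x, y) \<longrightarrow> ((x, y - 1), (x, y)) \<notin> F \<and> ((x, y), (x, y - 1)) \<notin> F) \<and>
    (even_vert N (x, y) \<longrightarrow> ((x, y + 1), (x, y)) \<notin> F \<and> ((x, y), (x, y + 1)) \<notin> F) \<and>
    \<not> (((x + 1, y), (x, y)) \<in> F \<and> ((x, y), (x - 1, y)) \<in> F)"
  using tfpl_vertex.turn[OF tfpl_vertex.intro[OF assms]] turn_weight_eq_0_iff
  by (simp add: even_vert_def)

lemma turn_gains_vanish_iff:
  assumes tfpl: "oriented_TFPL N F"
  shows "(\<forall>p\<in>tfpl_verts N. turn_gain N F (fst p) (snd p) = 0) \<longleftrightarrow>
    (\<forall>x y. even_vert N (x, y) \<longrightarrow> ((x, y + 1), (x, y)) \<notin> F \<and> ((x, y), (x, y + 1)) \<notin> F) \<and>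
    \<not> (\<exists>x y. ((x + 1, y), (x, y)) \<in> F \<and> ((x, y), (x - 1, y)) \<in> F)"
    (is "?gains \<longleftrightarrow> ?vertical \<and> ?horizontal")
proof
  assume gains: ?gains
  have "((x, y + 1), (x, y)) \<notin> F \<and> ((x, y), (x, y + 1)) \<notin> F" if "even_vert N (x, y)" for x y
  proof -
    have "(x, y) \<in> tfpl_verts N \<or> (((x, y + 1), (x, y)) \<notin> F \<and> ((x, y), (x, y + 1)) \<notin> F)"
      using oriented_TFPL_edge[OF tfpl] by blast
    then show ?thesis
      using gains turn_gain_eq_0_iff[OF tfpl] that by fastforce
  qed
  moreover have ?horizontal
  proof
    assume "\<exists>x y. ((x + 1, y), (x, y)) \<in> F \<and> ((x, y), (x - 1, y)) \<in> F"
    then obtain x y where "((x + 1, y), (x, y)) \<in> F" "((x, y), (x - 1, y)) \<in> F"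
      by blast
    moreover from this have "(x, y) \<in> tfpl_verts N"
      using oriented_TFPL_edge(1)[OF tfpl] by blast
    ultimately show False
      using gains turn_gain_eq_0_iff[OF tfpl] by fastforce
  qed
  ultimately show "?vertical \<and> ?horizontal"
    by blast
next
  assume "?vertical \<and> ?horizontal"
  then have vertical: ?vertical and horizontal: ?horizontal
    by blast+
  show ?gains
  proof (intro ballI)
    fix p
    assume p: "p \<in> tfpl_verts N"
    obtain x y where xy: "p = (x, y)"
      by (cases p)
    have "odd_vert N (x, y) \<Longrightarrow> even_vert N (x, y - 1)"
      using odd_vert_up_iff[of N x "y - 1"] by simp
    then have "turn_gain N F x y = 0"
      using turn_gain_eq_0_iff[OF tfpl p[unfolded xy]] vertical horizontal
        spec[OF spec[OF vertical, of x], of "y - 1"]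
      by auto
    then show "turn_gain N F (fst p) (snd p) = 0"
      by (simp add: xy)
  qed
qed

theorem proposition5p2:
  fixes N :: nat and F :: "(vert \<times> vert) set" and u v w :: "bool list"
  assumes "N \<ge> 1"
    and "oriented_TFPL N F"
    and "has_boundary N F u v w"
  shows "(int (dinv w) - int (dinv u) - int (dinv v) = 0) \<longleftrightarrow>
         (o_D N F = 0 \<and> e_U N F = 0 \<and>
          \<not> (\<exists>x y. ((x + 1, y), (x, y)) \<in> F \<and> ((x, y), (x - 1, y)) \<in> F))"
proof -
  let ?g = "\<lambda>p. turn_gain N F (fst p) (snd p)"
  have "int (dinv w) - int (dinv u) - int (dinv v) = 0 \<longleftrightarrow> (\<Sum>p\<in>tfpl_verts N. ?g p) = 0"
    using dinv_defect_eq_sum_turn_gain[OF assms(2,3,1)] by (metis mult_eq_0_iff zero_neq_numeral)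
  also have "\<dots> \<longleftrightarrow> (\<forall>p\<in>tfpl_verts N. ?g p = 0)"
    using finite_tfpl_verts turn_gain_nonneg[OF assms(2)] by (intro sum_nonneg_eq_0_iff) auto
  also have "\<dots> \<longleftrightarrow> o_D N F = 0 \<and> e_U N F = 0 \<and>
      \<not> (\<exists>x y. ((x + 1, y), (x, y)) \<in> F \<and> ((x, y), (x - 1, y)) \<in> F)"
    unfolding turn_gains_vanish_iff[OF assms(2)] o_D_eq_0_iff[OF assms(2)] e_U_eq_0_iff[OF assms(2)]
    by blast
  finally show ?thesis .
qed

end
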